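(* For every prime $p$ and every integer $q$ coprime to $p$, $$|\mathrm{def}(p;q,1)|\le |\mathrm{def}(p;1,1)|=\tfrac13(p-1)(p-2).$$
   Context: For $z\in\mathbb{R}$ define $((z))=z-[z]-\tfrac12$ if $z\notin\mathbb{Z}$ and $((z))=0$ if $z\in\mathbb{Z}$, where $[z]$ is the greatest integer $\le z$. For $q$ coprime to $p$ define $$\mathrm{def}(p;q,1)=-4p\sum_{k=0}^{p-1}\left(\left(\frac{k}{p}\right)\right)\left(\left(\frac{qk}{p}\right)\right).$$ *)

theory Defs
  imports Complex_Main "HOL-Computational_Algebra.Primes"
begin

definition sawtooth :: "real \<Rightarrow> real" where
  "sawtooth z = (if z \<in> \<int> then 0 else z - of_int \<lfloor>z\<rfloor> - 1/2)"

definition dedef :: "nat \<Rightarrow> int \<Rightarrow> real" where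
  "dedef p q = - 4 * real p *
     (\<Sum>k = 0..<p. sawtooth (real k / real p) * sawtooth (of_int (q * int k) / real p))"

end

theory Submission
  imports Defs
begin

(* Write a k = ((k/p)).  Since the sawtooth function has period 1, the second
   factor ((qk/p)) equals a (qk mod p), and for q coprime to p the map
   k |-> qk mod p permutes {0..<p}.  Hence the two sequences
   (a k) and (a (qk mod p)) have the same sum of squares S, and the elementary
   inequality |xy| <= (x^2 + y^2)/2 gives |sum_k a k * a (qk mod p)| <= S.
   For q = 1 the sum equals S exactly, so |def(p;q,1)| <= |def(p;1,1)| = 4pS,
   and 4pS = (p-1)(p-2)/3 by the explicit values a k = k/p - 1/2 (0 < k < p),
   a 0 = 0, together with Faulhaber's formula for sums of squares. *)

lemma sawtooth_add_int: "sawtooth (x + of_int n) = sawtooth x"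
proof -
  have "(x + of_int n \<in> \<int>) = (x \<in> \<int>)"
    by (metis Ints_add Ints_diff Ints_of_int add_diff_cancel_right')
  moreover have "\<lfloor>x + of_int n\<rfloor> = \<lfloor>x\<rfloor> + n" by simp
  ultimately show ?thesis unfolding sawtooth_def by simp
qed

lemma sawtooth_zero: "sawtooth 0 = 0"
  unfolding sawtooth_def by simp

lemma sawtooth_unit_interval:
  assumes "0 < x" "x < 1"
  shows "sawtooth x = x - 1/2"
proof -
  have "\<lfloor>x\<rfloor> = 0" using assms by (simp add: floor_eq_iff)
  moreover have "x \<notin> \<int>"
    using assms by (metis Ints_cases floor_of_int calculation of_int_0 less_irrefl)
  ultimately show ?thesis unfolding sawtooth_def by simp
qed

lemma sawtooth_residue:
  assumes "k < p"
  shows "sawtooth (real k / real p) = (if k = 0 then 0 else real k / real p - 1/2)"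
  using assms by (auto simp: sawtooth_zero intro: sawtooth_unit_interval)

lemma sawtooth_mod:
  fixes m :: int and p :: nat
  assumes "p > 0"
  shows "sawtooth (of_int m / real p) = sawtooth (real (nat (m mod int p)) / real p)"
proof -
  have "m = int p * (m div int p) + m mod int p" by simp
  hence "(of_int m :: real) = real p * of_int (m div int p) + of_int (m mod int p)"
    by (metis of_int_add of_int_mult of_int_of_nat_eq)
  hence "of_int m / real p = real (nat (m mod int p)) / real p + of_int (m div int p)"
    using assms by (simp add: field_simps)
  thus ?thesis by (simp add: sawtooth_add_int)
qed

text \<open>Faulhaber-type identity, cleared of denominators so that it can be
  proved by induction.\<close>
lemma sum_shifted_squares:
  "3 * (\<Sum>k<n. (2 * real k - c)^2)
     = 2 * (real n - 1) * real n * (2 * real n - 1) - 6 * c * (real n - 1) * real n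
       + 3 * real n * c^2"
  by (induction n) (simp_all add: algebra_simps power2_eq_square)

text \<open>The sum of squares \<open>\<Sum>\<^sub>k ((k/p))\<^sup>2\<close>, normalised by \<open>4p\<close>; this is
  \<open>|def(p;1,1)|\<close>.\<close>
lemma sum_sawtooth_squares:
  fixes p :: nat
  assumes "p > 0"
  shows "4 * real p * (\<Sum>k<p. (sawtooth (real k / real p))^2) = (real p - 1) * (real p - 2) / 3"
proof -
  have shift: "(\<Sum>k<p. (sawtooth (real k / real p))^2)
      = (\<Sum>k<p. (2 * real k - real p)^2) / (4 * (real p)^2) - 1/4"
  proof -
    have "(\<Sum>k<p. (sawtooth (real k / real p))^2)
        = (\<Sum>k<p. (2 * real k - real p)^2 / (4 * (real p)^2)) - 1/4"
    proof -
      have summand: "(real k / real p - 1/2)^2 = (2 * real k - real p)^2 / (4 * (real p)^2)" for k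
        using assms by (simp add: field_simps power2_eq_square)
      have "(\<Sum>k<p. (sawtooth (real k / real p))^2)
          = (\<Sum>k<p. (real k / real p - 1/2)^2) - (real 0 / real p - 1/2)^2"
        using assms by (simp add: sawtooth_residue sum.remove[of "{..<p}" 0] lessThan_iff)
      thus ?thesis by (simp add: summand power_divide)
    qed
    thus ?thesis by (simp add: sum_divide_distrib)
  qed
  show ?thesis
    unfolding shift using sum_shifted_squares[where n = p and c = "real p"] assms
    by (simp add: field_simps power2_eq_square)
qed

text \<open>For \<open>q\<close> coprime to \<open>p\<close>, multiplication by \<open>q\<close> permutes the residues
  modulo \<open>p\<close>, so sums over \<open>{..<p}\<close> are invariant under \<open>k \<mapsto> qk mod p\<close>.\<close>
lemma sum_reindex_mult_mod:
  fixes p :: nat and q :: int and f :: "nat \<Rightarrow> 'a::comm_monoid_add"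
  assumes "p > 0" "coprime q (int p)"
  shows "(\<Sum>k<p. f (nat ((q * int k) mod int p))) = (\<Sum>k<p. f k)"
proof -
  let ?g = "\<lambda>k. nat ((q * int k) mod int p)"
  have maps: "?g ` {..<p} \<subseteq> {..<p}"
    using assms by (auto simp: nat_less_iff)
  have inj: "inj_on ?g {..<p}"
  proof
    fix a b assume ab: "a \<in> {..<p}" "b \<in> {..<p}" "?g a = ?g b"
    have "(q * int a) mod int p = (q * int b) mod int p"
      using ab(3) assms(1) by (simp add: eq_nat_nat_iff)
    hence "int p dvd q * (int a - int b)"
      by (simp add: mod_eq_dvd_iff right_diff_distrib)
    hence "int p dvd int a - int b"
      using assms(2) by (metis coprime_commute coprime_dvd_mult_right_iff)
    hence "int a mod int p = int b mod int p"
      by (simp add: mod_eq_dvd_iff)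
    thus "a = b" using ab(1,2) by simp
  qed
  have "?g ` {..<p} = {..<p}"
    using inj maps by (simp add: endo_inj_surj)
  thus ?thesis
    using sum.reindex[OF inj, of f] by simp
qed

text \<open>A sum of products is bounded by the mean of the sums of squares
  (termwise \<open>|xy| \<le> (x\<^sup>2 + y\<^sup>2)/2\<close>).\<close>
lemma abs_sum_mult_le_mean_squares:
  fixes a b :: "'i \<Rightarrow> real"
  shows "\<bar>\<Sum>k\<in>A. a k * b k\<bar> \<le> ((\<Sum>k\<in>A. (a k)^2) + (\<Sum>k\<in>A. (b k)^2)) / 2"
proof -
  have termwise: "\<bar>a k * b k\<bar> \<le> ((a k)^2 + (b k)^2) / 2" for k
  proof -
    have "0 \<le> (\<bar>a k\<bar> - \<bar>b k\<bar>)^2" by simp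
    thus ?thesis by (simp add: power2_eq_square abs_mult algebra_simps)
  qed
  have "\<bar>\<Sum>k\<in>A. a k * b k\<bar> \<le> (\<Sum>k\<in>A. \<bar>a k * b k\<bar>)" by (rule sum_abs)
  also have "\<dots> \<le> (\<Sum>k\<in>A. ((a k)^2 + (b k)^2) / 2)" by (intro sum_mono termwise)
  finally show ?thesis by (simp add: sum.distrib sum_divide_distrib[symmetric])
qed

lemma dedef_as_correlation:
  assumes "p > 0"
  shows "dedef p q = - 4 * real p *
    (\<Sum>k<p. sawtooth (real k / real p) * sawtooth (real (nat ((q * int k) mod int p)) / real p))"
  unfolding dedef_def atLeast0LessThan
  using sawtooth_mod[OF assms] by (simp only: of_int_of_nat_eq)

theorem mainTheorem3:
  fixes p :: nat and q :: int
  assumes "prime p" and "coprime q (int p)"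
  shows "\<bar>dedef p q\<bar> \<le> \<bar>dedef p 1\<bar> \<and> \<bar>dedef p 1\<bar> = (real p - 1) * (real p - 2) / 3"
proof -
  have p0: "p > 0" using assms(1) prime_gt_0_nat by blast
  define a where "a k = sawtooth (real k / real p)" for k
  define S where "S = (\<Sum>k<p. (a k)^2)"
  have perm: "(\<Sum>k<p. (a (nat ((q * int k) mod int p)))^2) = S"
    unfolding S_def using sum_reindex_mult_mod[OF p0 assms(2)] .
  have "\<bar>\<Sum>k<p. a k * a (nat ((q * int k) mod int p))\<bar> \<le> S"
    using abs_sum_mult_le_mean_squares[of a "\<lambda>k. a (nat ((q * int k) mod int p))" "{..<p}"]
    unfolding perm S_def by simp
  moreover have "dedef p q = - 4 * real p * (\<Sum>k<p. a k * a (nat ((q * int k) mod int p)))"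
    unfolding a_def by (rule dedef_as_correlation[OF p0])
  ultimately have "\<bar>dedef p q\<bar> \<le> 4 * real p * S"
    by (simp add: abs_mult mult_left_mono)
  moreover have "dedef p 1 = - 4 * real p * S"
    unfolding dedef_def S_def a_def by (simp add: power2_eq_square atLeast0LessThan)
  moreover have "S \<ge> 0"
    unfolding S_def by (simp add: sum_nonneg)
  moreover have "4 * real p * S = (real p - 1) * (real p - 2) / 3"
    unfolding S_def a_def by (rule sum_sawtooth_squares[OF p0])
  ultimately show ?thesis by simp
qed

end
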